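(* Let $\epsilon>0$, $q>0$, and let $\Lambda_\epsilon$ be an $\epsilon$-lattice under the $\ell_2$ norm. For any $\boldsymbol\lambda\in\Lambda_\epsilon$, the expanded Voronoi region $\mathbf{Vor}^+(\boldsymbol\lambda)$ has volume at most $(1+2q)^d\,\mathbf{V}$.
   Context: A lattice is the set of integer combinations of a basis of $\mathbb{R}^d$. Under $\ell_2$, its packing radius $r_p$ is the supremum of $r$ such that balls of radius $r$ around distinct lattice points are disjoint and its cover radius $r_c$ is the infimum of $r$ such that balls of radius $r$ around lattice points cover $\mathbb{R}^d$; an $\epsilon$-lattice has $\epsilon=r_p\le r_c\le3\epsilon$. The Voronoi region of $\boldsymbol\lambda$ is $\mathbf{Vor}(\boldsymbol\lambda)=\{\mathbf{x}\in\mathbb{R}^d:\|\mathbf{x}-\boldsymbol\lambda\|_2<\|\mathbf{x}-\boldsymbol\lambda'\|_2\ \forall\boldsymbol\lambda'\in\Lambda_\epsilon\setminus\{\boldsymbol\lambda\}\}$; all Voronoi regions have a common volume $\mathbf{V}$. The expanded Voronoi region $\mathbf{Vor}^+(\boldsymbol\lambda)$ is the set of points within $\ell_2$ distance $2q\epsilon$ of $\mathbf{Vor}(\boldsymbol\lambda)$. *)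

theory Defs
  imports "HOL-Analysis.Analysis"
begin

text \<open>A lattice in the Euclidean space 'a (of dimension DIM('a)): the set of integer
  combinations of a basis of 'a, the basis being indexed by the standard basis Basis.\<close>
definition is_lattice :: "'a::euclidean_space set \<Rightarrow> bool" where
  "is_lattice L \<longleftrightarrow> (\<exists>b :: 'a \<Rightarrow> 'a.
     inj_on b Basis \<and> independent (b ` Basis) \<and> span (b ` Basis) = UNIV \<and>
     L = {(\<Sum>i\<in>Basis. of_int (c i) *\<^sub>R b i) | c :: 'a \<Rightarrow> int. True})"

definition packing_radius :: "'a::euclidean_space set \<Rightarrow> real" where
  "packing_radius L = Sup {r. r \<ge> 0 \<and>
     (\<forall>x\<in>L. \<forall>y\<in>L. x \<noteq> y \<longrightarrow> ball x r \<inter> ball y r = {})}"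

definition cover_radius :: "'a::euclidean_space set \<Rightarrow> real" where
  "cover_radius L = Inf {r. r \<ge> 0 \<and> (\<Union>x\<in>L. cball x r) = UNIV}"

definition eps_lattice :: "real \<Rightarrow> 'a::euclidean_space set \<Rightarrow> bool" where
  "eps_lattice \<epsilon> L \<longleftrightarrow> is_lattice L \<and> packing_radius L = \<epsilon> \<and>
     packing_radius L \<le> cover_radius L \<and> cover_radius L \<le> 3 * \<epsilon>"

definition Vor :: "'a::euclidean_space set \<Rightarrow> 'a \<Rightarrow> 'a set" where
  "Vor L m = {x. \<forall>m'\<in>L - {m}. dist x m < dist x m'}"

definition Vor_plus :: "real \<Rightarrow> real \<Rightarrow> 'a::euclidean_space set \<Rightarrow> 'a \<Rightarrow> 'a set" where
  "Vor_plus q \<epsilon> L m = {x. \<exists>y\<in>Vor L m. dist x y \<le> 2 * q * \<epsilon>}"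

end

theory Submission
  imports Defs
begin

text \<open>The homothety with centre \<open>m\<close> and ratio \<open>1 + 2q\<close> maps \<open>Vor(m)\<close> onto a superset of
  \<open>Vor\<^sup>+(m)\<close>. Indeed, if \<open>y \<in> Vor(m)\<close> and \<open>|x - y| \<le> 2q\<epsilon>\<close>, the preimage of \<open>x\<close> is a convex
  combination, with positive weight on \<open>y\<close>, of \<open>y\<close> and a point \<open>b\<close> at distance \<open>\<le> \<epsilon>\<close> from \<open>m\<close>;
  since distinct lattice points are \<open>2\<epsilon>\<close> apart, \<open>b\<close> lies in every closed half-space
  \<open>{z. |z - m| \<le> |z - m'|}\<close>, whereas \<open>y\<close> lies in every open one, so the combination lies in
  \<open>Vor(m)\<close>. The Voronoi region is convex, hence Lebesgue measurable, and the homothety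
  multiplies its measure by \<open>(1 + 2q)\<^sup>d\<close>.\<close>

lemma dist_less_dist_iff_inner:
  fixes x a b :: "'a::real_inner"
  shows "dist x a < dist x b \<longleftrightarrow> inner (2 *\<^sub>R (b - a)) x < inner b b - inner a a"
proof -
  have "dist x a < dist x b \<longleftrightarrow> (dist x a)\<^sup>2 < (dist x b)\<^sup>2"
    by (meson power_less_imp_less_base power_strict_mono zero_le_dist zero_less_numeral)
  also have "\<dots> \<longleftrightarrow> inner (2 *\<^sub>R (b - a)) x < inner b b - inner a a"
    unfolding dist_norm power2_norm_eq_inner
    by (simp add: inner_diff_left inner_diff_right inner_commute algebra_simps)
  finally show ?thesis .
qed

lemma dist_le_dist_iff_inner:
  fixes x a b :: "'a::real_inner"
  shows "dist x a \<le> dist x b \<longleftrightarrow> inner (2 *\<^sub>R (b - a)) x \<le> inner b b - inner a a"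
  using dist_less_dist_iff_inner[of x b a] by (auto simp: inner_diff_left)

lemma Vor_eq_Inter_halfspaces:
  "Vor L m = (\<Inter>m'\<in>L - {m}. {x. inner (2 *\<^sub>R (m' - m)) x < inner m' m' - inner m m})"
  unfolding Vor_def by (auto simp: dist_less_dist_iff_inner)

lemma convex_Vor: "convex (Vor L m)"
  unfolding Vor_eq_Inter_halfspaces by (intro convex_INT convex_halfspace_lt)

lemma lebesgue_sets_convex:
  fixes S :: "'a::euclidean_space set"
  assumes "convex S"
  shows "S \<in> sets lebesgue"
proof -
  have "S - interior S \<subseteq> frontier S"
    using closure_subset by (auto simp: frontier_def)
  then have "S - interior S \<in> null_sets lebesgue"
    using negligible_subset negligible_convex_frontier[OF assms] negligible_iff_null_sets
    by blast
  moreover have "interior S \<in> sets lebesgue"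
    by (simp add: borel_open)
  moreover have "S = interior S \<union> (S - interior S)"
    using interior_subset by blast
  ultimately show ?thesis
    by (metis null_setsD2 sets.Un)
qed

lemma packing_radius_le_half_dist:
  fixes L :: "'a::euclidean_space set"
  assumes "x \<in> L" "y \<in> L" "x \<noteq> y"
  shows "2 * packing_radius L \<le> dist x y"
proof -
  define R where "R = {r. r \<ge> 0 \<and> (\<forall>x\<in>L. \<forall>y\<in>L. x \<noteq> y \<longrightarrow> ball x r \<inter> ball y r = {})}"
  have "r \<le> dist x y / 2" if "r \<in> R" for r
  proof (rule ccontr)
    assume "\<not> r \<le> dist x y / 2"
    then have "midpoint x y \<in> ball x r \<inter> ball y r"
      by (simp add: dist_midpoint)
    then show False
      using that assms unfolding R_def by blast
  qed
  moreover have "0 \<in> R"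
    unfolding R_def by auto
  ultimately have "Sup R \<le> dist x y / 2"
    by (intro cSup_least) auto
  then show ?thesis
    unfolding packing_radius_def R_def by simp
qed

lemma Vor_plus_subset_homothety:
  fixes L :: "'a::euclidean_space set"
  assumes q: "q > 0" and sep: "\<And>m'. m' \<in> L - {m} \<Longrightarrow> 2 * \<epsilon> \<le> dist m m'"
  defines "c \<equiv> 1 + 2 * q"
  shows "Vor_plus q \<epsilon> L m \<subseteq> (\<lambda>z. c *\<^sub>R z + (m - c *\<^sub>R m)) ` Vor L m"
proof
  fix x assume "x \<in> Vor_plus q \<epsilon> L m"
  then obtain y where y: "y \<in> Vor L m" and dist_xy: "dist x y \<le> 2 * q * \<epsilon>"
    unfolding Vor_plus_def by auto
  define t where "t = 1 / c"
  define b where "b = m + (1 / (2 * q)) *\<^sub>R (x - y)"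
  define p where "p = m + t *\<^sub>R (x - m)"
  have t: "0 < t" "t \<le> 1"
    using q by (simp_all add: t_def c_def)
  have "(1 - t) * (1 / (2 * q)) = t"
    using q by (simp add: t_def c_def field_simps)
  then have "(1 - t) *\<^sub>R b = (1 - t) *\<^sub>R m + t *\<^sub>R (x - y)"
    by (simp add: b_def scaleR_add_right)
  then have p_comb: "p = t *\<^sub>R y + (1 - t) *\<^sub>R b"
    by (simp add: p_def algebra_simps)
  have "dist b m = dist x y / (2 * q)"
    using q by (simp add: b_def dist_norm)
  also have "\<dots> \<le> \<epsilon>"
    using dist_xy q by (simp add: pos_divide_le_eq mult_ac)
  finally have dist_bm: "dist b m \<le> \<epsilon>" .
  have "p \<in> Vor L m"
    unfolding Vor_eq_Inter_halfspaces
  proof (intro InterI, clarify)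
    fix m' assume m': "m' \<in> L" "m' \<noteq> m"
    define w where "w = 2 *\<^sub>R (m' - m)"
    define \<beta> where "\<beta> = inner m' m' - inner m m"
    have "inner w y < \<beta>"
      using y m' unfolding Vor_eq_Inter_halfspaces w_def \<beta>_def by blast
    then have "t * inner w y < t * \<beta>"
      using t by simp
    have "dist b m \<le> dist b m'"
      using dist_bm sep[of m'] m' dist_triangle[of m m' b] by (simp add: dist_commute)
    then have "(1 - t) * inner w b \<le> (1 - t) * \<beta>"
      using t by (intro mult_left_mono) (simp_all add: dist_le_dist_iff_inner w_def \<beta>_def)
    with \<open>t * inner w y < t * \<beta>\<close> have "inner w p < \<beta>"
      by (simp add: p_comb inner_add_right algebra_simps)
    then show "inner (2 *\<^sub>R (m' - m)) p < inner m' m' - inner m m"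
      by (simp add: w_def \<beta>_def)
  qed
  moreover have "c *\<^sub>R p = c *\<^sub>R m + (x - m)"
    using q by (simp add: p_def t_def c_def scaleR_add_right)
  then have "x = c *\<^sub>R p + (m - c *\<^sub>R m)"
    by simp
  ultimately show "x \<in> (\<lambda>z. c *\<^sub>R z + (m - c *\<^sub>R m)) ` Vor L m"
    by blast
qed

theorem lemma30:
  fixes L :: "'a::euclidean_space set" and \<epsilon> q :: real and m :: 'a
  assumes "\<epsilon> > 0" and "q > 0" and "eps_lattice \<epsilon> L" and "m \<in> L"
  shows "emeasure lebesgue (Vor_plus q \<epsilon> L m)
           \<le> ennreal ((1 + 2 * q) ^ DIM('a)) * emeasure lebesgue (Vor L m)"
proof -
  define c where "c = 1 + 2 * q"
  define H where "H z = c *\<^sub>R z + (m - c *\<^sub>R m)" for z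
  have "\<And>m'. m' \<in> L - {m} \<Longrightarrow> 2 * \<epsilon> \<le> dist m m'"
    using assms(3,4) packing_radius_le_half_dist by (auto simp: eps_lattice_def)
  then have "Vor_plus q \<epsilon> L m \<subseteq> H ` Vor L m"
    unfolding H_def c_def using Vor_plus_subset_homothety[OF assms(2)] by blast
  moreover have "H ` Vor L m \<in> sets lebesgue"
    unfolding H_def using convex_affinity[OF convex_Vor, of "m - c *\<^sub>R m" c L m]
    by (intro lebesgue_sets_convex) (simp add: add.commute)
  ultimately have "emeasure lebesgue (Vor_plus q \<epsilon> L m) \<le> emeasure lebesgue (H ` Vor L m)"
    by (rule emeasure_mono)
  also have "\<dots> = ennreal (c ^ DIM('a)) * emeasure lebesgue (Vor L m)"
    unfolding H_def using emeasure_lebesgue_affine[of c "m - c *\<^sub>R m" "Vor L m"] assms(2)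
    by (simp add: c_def)
  finally show ?thesis
    by (simp add: c_def)
qed

end
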